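(* Let $n_z\ge 2$ and let $\underline Z=\{Z_j: j=1,\dots,n_z\}$ be a set of real numbers with $0\in\underline Z$. Then the hybrid knowledge gradient satisfies $\mathrm{KG}_h(x)\ge 0$ for all $x\in X$, and if $x$ is sampled infinitely often then $\mathrm{KG}_h(x)=0$ (in the limit as the number of samples at $x$ tends to infinity).
   Context: Global optimization setting: an unknown function $f:X\to\mathbb{R}$ is observed with independent Gaussian noise of variance $\sigma_0^2>0$. After $n$ observations, a Gaussian process model has posterior mean $\mu^n$ and posterior covariance $k^n$. For a candidate sample location $x^{n+1}$ define $\tilde\sigma(x';x^{n+1})=k^n(x',x^{n+1})/\sqrt{k^n(x^{n+1},x^{n+1})+\sigma_0^2}$, so that the posterior mean after observing $y^{n+1}$ at $x^{n+1}$ is $\mu^{n+1}(x')=\mu^n(x')+\tilde\sigma(x';x^{n+1})Z$ with $Z\sim\mathcal N(0,1)$. Hybrid knowledge gradient: given fixed values $Z_1,\dots,Z_{n_z}$, for each $j$ let $x^*_j\in\operatorname{arg\,max}_{x'\in X}\big(\mu^n(x')+\tilde\sigma(x';x^{n+1})Z_j\big)$ and let $X^*_d=\{x^*_1,\dots,x^*_{n_z}\}$. With $\underline\mu^*=\mu^n(X^*_d)\in\mathbb{R}^{n_z}$ and $\underline{\tilde\sigma}^*(x^{n+1})=\tilde\sigma(X^*_d;x^{n+1})\in\mathbb{R}^{n_z}$ (componentwise), $$\mathrm{KG}_h(x^{n+1})=\mathbb{E}_{Z\sim\mathcal N(0,1)}\Big[\max_{j}\big(\underline\mu^*_j+\underline{\tilde\sigma}^*_j(x^{n+1})Z\big)\Big]-\max_j\underline\mu^*_j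 .$$ *)

theory Defs
  imports "HOL-Probability.Probability"
begin

definition pos_kernel :: "'a set \<Rightarrow> ('a \<Rightarrow> 'a \<Rightarrow> real) \<Rightarrow> bool" where
  "pos_kernel X k \<longleftrightarrow> (\<forall>a\<in>X. \<forall>b\<in>X. k a b = k b a) \<and>
     (\<forall>F c. finite F \<longrightarrow> F \<subseteq> X \<longrightarrow> (\<Sum>a\<in>F. \<Sum>b\<in>F. c a * c b * k a b) \<ge> 0)"

text \<open>GP posterior covariance after n observations at xs 0, ..., xs (n-1),
  noise variance s (sequential rank-one Bayesian update).\<close>
primrec post_cov :: "('a \<Rightarrow> 'a \<Rightarrow> real) \<Rightarrow> real \<Rightarrow> (nat \<Rightarrow> 'a) \<Rightarrow> nat \<Rightarrow> 'a \<Rightarrow> 'a \<Rightarrow> real" where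
  "post_cov k0 s xs 0 = k0"
| "post_cov k0 s xs (Suc n) =
     (\<lambda>a b. post_cov k0 s xs n a b
        - post_cov k0 s xs n a (xs n) * post_cov k0 s xs n (xs n) b
          / (post_cov k0 s xs n (xs n) (xs n) + s))"

primrec post_mean :: "('a \<Rightarrow> real) \<Rightarrow> ('a \<Rightarrow> 'a \<Rightarrow> real) \<Rightarrow> real \<Rightarrow> (nat \<Rightarrow> 'a) \<Rightarrow> (nat \<Rightarrow> real)
    \<Rightarrow> nat \<Rightarrow> 'a \<Rightarrow> real" where
  "post_mean m0 k0 s xs ys 0 = m0"
| "post_mean m0 k0 s xs ys (Suc n) =
     (\<lambda>a. post_mean m0 k0 s xs ys n a
        + post_cov k0 s xs n a (xs n) / (post_cov k0 s xs n (xs n) (xs n) + s)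
          * (ys n - post_mean m0 k0 s xs ys n (xs n)))"

definition sigt :: "('a \<Rightarrow> 'a \<Rightarrow> real) \<Rightarrow> real \<Rightarrow> 'a \<Rightarrow> 'a \<Rightarrow> real" where
  "sigt k s x' x = k x' x / sqrt (k x x + s)"

definition is_kg_argmax :: "'a set \<Rightarrow> ('a \<Rightarrow> real) \<Rightarrow> ('a \<Rightarrow> 'a \<Rightarrow> real) \<Rightarrow> real \<Rightarrow> 'a \<Rightarrow> real \<Rightarrow> 'a \<Rightarrow> bool" where
  "is_kg_argmax X mu k s x Z x' \<longleftrightarrow> x' \<in> X \<and>
     (\<forall>y\<in>X. mu y + sigt k s y x * Z \<le> mu x' + sigt k s x' x * Z)"

definition kg_h :: "('a \<Rightarrow> real) \<Rightarrow> ('a \<Rightarrow> 'a \<Rightarrow> real) \<Rightarrow> real \<Rightarrow> nat \<Rightarrow> (nat \<Rightarrow> 'a) \<Rightarrow> 'a \<Rightarrow> real" where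
  "kg_h mu k s nz xstar x =
     (LINT z|lborel. std_normal_density z *
        (MAX j\<in>{..<nz}. mu (xstar j) + sigt k s (xstar j) x * z))
     - (MAX j\<in>{..<nz}. mu (xstar j))"

end

theory Submission
  imports Defs
begin

text \<open>For fixed discretisation points, KG_h is E[max_j (a_j + b_j Z)] - max_j a_j with
  a_j = mu(x*_j) and b_j = sigma-tilde(x*_j; x). Comparing the maximum with the index attaining
  max_j a_j gives KG_h \<ge> 0, because E[b Z] = 0; bounding it by max_j a_j + max_j |b_j| |Z| gives
  KG_h \<le> max_j |b_j| sqrt(2/pi). Cauchy-Schwarz for the positive semidefinite posterior kernel
  gives |sigma-tilde(x'; x)| \<le> sqrt(k^n(x',x') k^n(x,x)) / sigma_0, and k^n(x',x') \<le> k^0(x',x')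
  is bounded on the compact X. Posterior variances never increase, and each observation at x
  lowers v = k^n(x,x) by v^2 / (v + sigma_0^2), so sampling x infinitely often forces
  k^n(x,x) \<rightarrow> 0.\<close>

lemma integral_std_normal_affine:
  "(LINT z|lborel. std_normal_density z * (c + d * z)) = c"
proof -
  have "(LINT z|lborel. std_normal_density z * (c + d * z))
      = (LINT z|lborel. c * std_normal_density z + d * (std_normal_density z * z ^ (2 * 0 + 1)))"
    by (simp add: algebra_simps)
  also have "\<dots> = c"
    using integrable_std_normal_moment[of 1] integral_std_normal_moment_odd[of 0] by simp
  finally show ?thesis .
qed

lemma integrable_std_normal_affine:
  "integrable lborel (\<lambda>z. std_normal_density z * (c + d * z))"
  using integrable_std_normal_moment[of 1]
  by (simp add: distrib_left mult.left_commute)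

lemma integrable_std_normal_abs_affine:
  "integrable lborel (\<lambda>z. std_normal_density z * (c + e * \<bar>z\<bar>))"
  using integrable_std_normal_moment_abs[of 1]
  by (simp add: distrib_left mult.left_commute)

lemma integral_std_normal_abs_affine:
  "(LINT z|lborel. std_normal_density z * (c + e * \<bar>z\<bar>)) = c + e * sqrt (2 / pi)"
proof -
  have "(LINT z|lborel. std_normal_density z * (c + e * \<bar>z\<bar>))
      = (LINT z|lborel. c * std_normal_density z + e * (std_normal_density z * \<bar>z\<bar> ^ (2 * 0 + 1)))"
    by (simp add: algebra_simps)
  also have "\<dots> = c + e * sqrt (2 / pi)"
    using integrable_std_normal_moment_abs[of 1] integral_std_normal_moment_abs_odd[of 0] by simp
  finally show ?thesis .
qed

lemma Max_affine_le:
  fixes a b :: "'i \<Rightarrow> real"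
  assumes "finite I" "I \<noteq> {}" "\<forall>j\<in>I. \<bar>b j\<bar> \<le> e"
  shows "(MAX j\<in>I. a j + b j * z) \<le> (MAX j\<in>I. a j) + e * \<bar>z\<bar>"
proof -
  have "a j + b j * z \<le> (MAX j\<in>I. a j) + e * \<bar>z\<bar>" if "j \<in> I" for j
  proof -
    have "b j * z \<le> e * \<bar>z\<bar>"
      using assms(3) that by (metis abs_ge_self abs_mult abs_ge_zero mult_right_mono order_trans)
    moreover have "a j \<le> (MAX j\<in>I. a j)" using assms(1) that by simp
    ultimately show ?thesis by linarith
  qed
  then show ?thesis using assms(1,2) by simp
qed

lemma integrable_std_normal_Max_affine:
  fixes a b :: "'i \<Rightarrow> real"
  assumes I: "finite I" "I \<noteq> {}"
  shows "integrable lborel (\<lambda>z. std_normal_density z * (MAX j\<in>I. a j + b j * z))"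
proof (rule Bochner_Integration.integrable_bound)
  define M where "M = (MAX j\<in>I. a j)"
  define e where "e = (MAX j\<in>I. \<bar>b j\<bar>)"
  have "M \<in> a ` I" unfolding M_def using I by (intro Max_in) auto
  then obtain j0 where j0: "j0 \<in> I" "a j0 = M" by auto
  have "\<bar>MAX j\<in>I. a j + b j * z\<bar> \<le> \<bar>M\<bar> + e * \<bar>z\<bar>" for z
  proof -
    have "a j0 + b j0 * z \<le> (MAX j\<in>I. a j + b j * z)"
      using I(1) j0(1) by (intro Max_ge) auto
    moreover have "\<bar>b j0 * z\<bar> \<le> e * \<bar>z\<bar>"
      using I j0 unfolding e_def by (simp add: abs_mult mult_right_mono)
    moreover have "(MAX j\<in>I. a j + b j * z) \<le> M + e * \<bar>z\<bar>"
      unfolding M_def e_def using I by (intro Max_affine_le) auto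
    ultimately show ?thesis using j0 by linarith
  qed
  then show "AE z in lborel. norm (std_normal_density z * (MAX j\<in>I. a j + b j * z))
      \<le> norm (std_normal_density z * (\<bar>M\<bar> + e * \<bar>z\<bar>))"
    by (intro AE_I2) (auto simp: abs_mult intro!: mult_left_mono order_trans[OF _ abs_ge_self])
qed (use I(1) integrable_std_normal_abs_affine in auto)

lemma integral_std_normal_Max_affine_ge:
  fixes a b :: "'i \<Rightarrow> real"
  assumes I: "finite I" "I \<noteq> {}"
  shows "(MAX j\<in>I. a j) \<le> (LINT z|lborel. std_normal_density z * (MAX j\<in>I. a j + b j * z))"
proof -
  have "(MAX j\<in>I. a j) \<in> a ` I" using I by (intro Max_in) auto
  then obtain j0 where j0: "j0 \<in> I" "a j0 = (MAX j\<in>I. a j)" by auto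
  have "a j0 = (LINT z|lborel. std_normal_density z * (a j0 + b j0 * z))"
    by (simp only: integral_std_normal_affine)
  also have "\<dots> \<le> (LINT z|lborel. std_normal_density z * (MAX j\<in>I. a j + b j * z))"
    using I(1) j0(1)
    by (intro integral_mono integrable_std_normal_affine integrable_std_normal_Max_affine[OF I]
        mult_left_mono Max_ge) auto
  finally show ?thesis using j0 by simp
qed

lemma integral_std_normal_Max_affine_le:
  fixes a b :: "'i \<Rightarrow> real"
  assumes I: "finite I" "I \<noteq> {}" and b: "\<forall>j\<in>I. \<bar>b j\<bar> \<le> e"
  shows "(LINT z|lborel. std_normal_density z * (MAX j\<in>I. a j + b j * z))
    \<le> (MAX j\<in>I. a j) + e * sqrt (2 / pi)"
proof -
  have "(LINT z|lborel. std_normal_density z * (MAX j\<in>I. a j + b j * z))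
      \<le> (LINT z|lborel. std_normal_density z * ((MAX j\<in>I. a j) + e * \<bar>z\<bar>))"
    using Max_affine_le[OF I b]
    by (intro integral_mono integrable_std_normal_Max_affine[OF I]
        integrable_std_normal_abs_affine mult_left_mono) auto
  then show ?thesis by (simp only: integral_std_normal_abs_affine)
qed

lemma pos_kernel_sym: "pos_kernel X k \<Longrightarrow> a \<in> X \<Longrightarrow> b \<in> X \<Longrightarrow> k a b = k b a"
  unfolding pos_kernel_def by blast

lemma pos_kernel_nonneg:
  "pos_kernel X k \<Longrightarrow> finite F \<Longrightarrow> F \<subseteq> X \<Longrightarrow> 0 \<le> (\<Sum>a\<in>F. \<Sum>b\<in>F. c a * c b * k a b)"
  unfolding pos_kernel_def by blast

lemma sum_insert_extend:
  fixes c h :: "'a \<Rightarrow> real"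
  assumes "finite F"
  shows "(\<Sum>a\<in>insert x F. ((if a \<in> F then c a else 0) + (if a = x then t else 0)) * h a)
    = (\<Sum>a\<in>F. c a * h a) + t * h x"
proof -
  have "(\<Sum>a\<in>insert x F. (if a \<in> F then c a else 0) * h a)
      = (\<Sum>a\<in>insert x F. if a \<in> F then c a * h a else 0)"
    by (intro sum.cong) auto
  also have "\<dots> = (\<Sum>a\<in>F. c a * h a)"
    using assms by (simp add: sum.inter_restrict[symmetric] Int_absorb1 subset_insertI)
  finally have "(\<Sum>a\<in>insert x F. (if a \<in> F then c a else 0) * h a) = (\<Sum>a\<in>F. c a * h a)" .
  moreover have "(\<Sum>a\<in>insert x F. (if a = x then t else 0) * h a)
      = (\<Sum>a\<in>insert x F. if a = x then t * h a else 0)"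
    by (intro sum.cong) auto
  then have "(\<Sum>a\<in>insert x F. (if a = x then t else 0) * h a) = t * h x"
    using assms by (simp add: sum.delta')
  ultimately show ?thesis by (simp add: distrib_right sum.distrib)
qed

lemma pos_kernel_extend_quadratic:
  assumes k: "pos_kernel X k" and F: "finite F" "F \<subseteq> X" and x: "x \<in> X"
  shows "0 \<le> (\<Sum>a\<in>F. \<Sum>b\<in>F. c a * c b * k a b) + 2 * t * (\<Sum>a\<in>F. c a * k a x) + t\<^sup>2 * k x x"
proof -
  define c' where "c' a = (if a \<in> F then c a else 0) + (if a = x then t else 0)" for a
  have "0 \<le> (\<Sum>a\<in>insert x F. \<Sum>b\<in>insert x F. c' a * c' b * k a b)"
    using F x by (intro pos_kernel_nonneg[OF k]) auto
  also have "\<dots> = (\<Sum>a\<in>insert x F. c' a * (\<Sum>b\<in>insert x F. c' b * k a b))"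
    by (simp add: sum_distrib_left mult.assoc)
  also have "\<dots> = (\<Sum>a\<in>insert x F. c' a * ((\<Sum>b\<in>F. c b * k a b) + t * k a x))"
    unfolding c'_def by (simp only: sum_insert_extend[OF F(1)])
  also have "\<dots> = (\<Sum>a\<in>F. c a * ((\<Sum>b\<in>F. c b * k a b) + t * k a x))
      + t * ((\<Sum>b\<in>F. c b * k x b) + t * k x x)"
    unfolding c'_def by (rule sum_insert_extend[OF F(1)])
  also have "\<dots> = (\<Sum>a\<in>F. \<Sum>b\<in>F. c a * c b * k a b) + 2 * t * (\<Sum>a\<in>F. c a * k a x) + t\<^sup>2 * k x x"
  proof -
    have "(\<Sum>b\<in>F. c b * k x b) = (\<Sum>a\<in>F. c a * k a x)"
      using F x pos_kernel_sym[OF k] by (intro sum.cong) auto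
    then show ?thesis
      by (simp add: algebra_simps power2_eq_square sum.distrib sum_distrib_left)
  qed
  finally show ?thesis .
qed

lemma quadratic_nonneg_imp_discriminant_le:
  fixes A B C :: real
  assumes q: "\<And>t. 0 \<le> C + 2 * t * B + t\<^sup>2 * A" and A: "0 \<le> A"
  shows "B\<^sup>2 \<le> A * C"
proof (cases "A = 0")
  case True
  have "B = 0"
  proof (rule ccontr)
    assume "B \<noteq> 0"
    then have "C + 2 * (- (C + 1) / (2 * B)) * B + (- (C + 1) / (2 * B))\<^sup>2 * A = -1"
      using True by (simp add: field_simps)
    then show False using q by (metis neg_0_le_iff_le not_one_le_zero)
  qed
  then show ?thesis using True by simp
next
  case False
  then have "A > 0" using A by simp
  have "0 \<le> C + 2 * (- B / A) * B + (- B / A)\<^sup>2 * A" by (rule q)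
  also have "\<dots> = C - B\<^sup>2 / A" using \<open>A > 0\<close> by (simp add: field_simps power2_eq_square)
  finally show ?thesis using \<open>A > 0\<close> by (simp add: field_simps)
qed

lemma pos_kernel_diag_nonneg: "pos_kernel X k \<Longrightarrow> a \<in> X \<Longrightarrow> 0 \<le> k a a"
  using pos_kernel_extend_quadratic[of X k "{}" a "\<lambda>_. 0" 1] by simp

lemma pos_kernel_Cauchy_Schwarz:
  assumes k: "pos_kernel X k" and a: "a \<in> X" and b: "b \<in> X"
  shows "(k a b)\<^sup>2 \<le> k a a * k b b"
proof -
  have "(k a b)\<^sup>2 \<le> k b b * k a a"
    using pos_kernel_extend_quadratic[OF k _ _ b, of "{a}" "\<lambda>_. 1"] a
    by (intro quadratic_nonneg_imp_discriminant_le pos_kernel_diag_nonneg[OF k b]) simp_all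
  then show ?thesis by (simp add: mult.commute)
qed

lemma pos_kernel_rank_one_update:
  assumes k: "pos_kernel X k" and x: "x \<in> X" and s: "s > 0"
  shows "pos_kernel X (\<lambda>a b. k a b - k a x * k x b / (k x x + s))"
  unfolding pos_kernel_def
proof (intro conjI allI impI ballI)
  fix a b assume "a \<in> X" "b \<in> X"
  then show "k a b - k a x * k x b / (k x x + s) = k b a - k b x * k x a / (k x x + s)"
    using pos_kernel_sym[OF k] x by (metis mult.commute)
next
  fix F c assume F: "finite F" "F \<subseteq> X"
  define Q where "Q = (\<Sum>a\<in>F. \<Sum>b\<in>F. c a * c b * k a b)"
  define B where "B = (\<Sum>a\<in>F. c a * k a x)"
  have K: "0 \<le> k x x" by (rule pos_kernel_diag_nonneg[OF k x])
  have Q: "0 \<le> Q" unfolding Q_def by (rule pos_kernel_nonneg[OF k F])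
  have "B\<^sup>2 \<le> k x x * Q"
    using pos_kernel_extend_quadratic[OF k F x] K unfolding Q_def B_def
    by (intro quadratic_nonneg_imp_discriminant_le) simp_all
  also have "\<dots> \<le> (k x x + s) * Q" using Q s by (intro mult_right_mono) auto
  finally have "B\<^sup>2 / (k x x + s) \<le> Q"
    using K s by (simp add: divide_le_eq mult.commute)
  moreover have "(\<Sum>a\<in>F. \<Sum>b\<in>F. c a * c b * (k a b - k a x * k x b / (k x x + s)))
      = Q - B\<^sup>2 / (k x x + s)"
  proof -
    have "(\<Sum>a\<in>F. \<Sum>b\<in>F. c a * c b * (k a b - k a x * k x b / (k x x + s)))
        = (\<Sum>a\<in>F. \<Sum>b\<in>F. c a * c b * k a b - (c a * k a x) * (c b * k b x) / (k x x + s))"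
      using F x pos_kernel_sym[OF k] by (intro sum.cong refl) (auto simp: algebra_simps)
    also have "\<dots> = Q - B\<^sup>2 / (k x x + s)"
      unfolding Q_def B_def power2_eq_square
      by (simp add: sum_subtractf sum_divide_distrib sum_product)
    finally show ?thesis .
  qed
  ultimately show "0 \<le> (\<Sum>a\<in>F. \<Sum>b\<in>F. c a * c b * (k a b - k a x * k x b / (k x x + s)))"
    by simp
qed

lemma pos_kernel_post_cov:
  assumes k0: "pos_kernel X k0" and s: "s > 0" and xs: "\<forall>n. xs n \<in> X"
  shows "pos_kernel X (post_cov k0 s xs n)"
proof (induction n)
  case 0
  then show ?case using k0 by simp
next
  case (Suc n)
  then show ?case using pos_kernel_rank_one_update[OF Suc xs[rule_format] s] by simp
qed

lemma post_cov_diag_Suc_le: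
  assumes k0: "pos_kernel X k0" and s: "s > 0" and xs: "\<forall>n. xs n \<in> X" and a: "a \<in> X"
  shows "post_cov k0 s xs (Suc n) a a \<le> post_cov k0 s xs n a a"
proof -
  let ?k = "post_cov k0 s xs n"
  have k: "pos_kernel X ?k" by (rule pos_kernel_post_cov[OF k0 s xs])
  have "?k a (xs n) * ?k (xs n) a = (?k a (xs n))\<^sup>2"
    using pos_kernel_sym[OF k a xs[rule_format]] by (simp add: power2_eq_square)
  moreover have "?k (xs n) (xs n) + s > 0"
    using pos_kernel_diag_nonneg[OF k xs[rule_format, of n]] s by simp
  ultimately show ?thesis by simp
qed

lemma post_cov_diag_le_prior:
  assumes k0: "pos_kernel X k0" and s: "s > 0" and xs: "\<forall>n. xs n \<in> X" and a: "a \<in> X"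
  shows "post_cov k0 s xs n a a \<le> k0 a a"
proof (induction n)
  case 0
  then show ?case by simp
next
  case (Suc n)
  then show ?case using post_cov_diag_Suc_le[OF k0 s xs a, of n] by linarith
qed

lemma post_cov_diag_tendsto_zero:
  assumes k0: "pos_kernel X k0" and s: "s > 0" and xs: "\<forall>n. xs n \<in> X" and x: "x \<in> X"
    and sampled: "infinite {n. xs n = x}"
  shows "(\<lambda>n. post_cov k0 s xs n x x) \<longlonglongrightarrow> 0"
proof -
  define v where "v n = post_cov k0 s xs n x x" for n
  have v_nonneg: "0 \<le> v n" for n
    unfolding v_def by (rule pos_kernel_diag_nonneg[OF pos_kernel_post_cov[OF k0 s xs] x])
  have v_le: "v n \<le> k0 x x" for n
    unfolding v_def by (rule post_cov_diag_le_prior[OF k0 s xs x])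
  have "decseq v"
    unfolding v_def using post_cov_diag_Suc_le[OF k0 s xs x] by (intro decseq_SucI) auto
  then obtain L where L: "v \<longlonglongrightarrow> L" "\<And>n. L \<le> v n"
    using decseq_convergent[of v 0] v_nonneg by blast
  have drop: "v n - v (Suc n) = (v n)\<^sup>2 / (v n + s)" if "xs n = x" for n
    using that by (simp add: v_def power2_eq_square)
  have "0 \<le> L" using L(1) v_nonneg by (intro LIMSEQ_le_const) auto
  have "L = 0"
  proof (rule ccontr)
    assume "L \<noteq> 0"
    with \<open>0 \<le> L\<close> have "L > 0" by simp
    define d where "d = L\<^sup>2 / (k0 x x + s)"
    have "d > 0"
      unfolding d_def using \<open>L > 0\<close> v_le[of 0] v_nonneg[of 0] s by simp
    have "(\<lambda>n. v n - v (Suc n)) \<longlonglongrightarrow> 0"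
      using tendsto_diff[OF L(1) LIMSEQ_Suc[OF L(1)]] by simp
    then have "\<forall>\<^sub>F n in sequentially. v n - v (Suc n) < d"
      using \<open>d > 0\<close> by (rule order_tendstoD(2))
    then obtain N where N: "\<And>n. n \<ge> N \<Longrightarrow> v n - v (Suc n) < d"
      by (auto simp: eventually_sequentially)
    obtain n where n: "n \<ge> N" "xs n = x"
      using sampled by (auto simp: infinite_nat_iff_unbounded_le)
    have "d \<le> (v n)\<^sup>2 / (v n + s)"
      unfolding d_def using \<open>L > 0\<close> L(2)[of n] v_le[of n] v_nonneg[of n] s
      by (intro frac_le power_mono) auto
    then show False using N[OF n(1)] drop[OF n(2)] by simp
  qed
  then show ?thesis using L(1) unfolding v_def by simp
qed

lemma abs_sigt_le:
  assumes k: "pos_kernel X k" and s: "s > 0" and a: "a \<in> X" and x: "x \<in> X"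
  shows "\<bar>sigt k s a x\<bar> \<le> sqrt (k a a) * sqrt (k x x) / sqrt s"
proof -
  have kxx: "0 \<le> k x x" by (rule pos_kernel_diag_nonneg[OF k x])
  have "\<bar>k a x\<bar> \<le> sqrt (k a a) * sqrt (k x x)"
    using pos_kernel_Cauchy_Schwarz[OF k a x] by (simp add: real_le_rsqrt real_sqrt_mult[symmetric])
  moreover have "sqrt s \<le> sqrt (k x x + s)" using kxx by simp
  ultimately show ?thesis
    unfolding sigt_def using kxx s by (simp add: abs_div frac_le)
qed

lemma kg_h_nonneg:
  assumes "nz > 0"
  shows "0 \<le> kg_h mu k s nz xstar x"
proof -
  have "{..<nz} \<noteq> {}" using assms by auto
  from integral_std_normal_Max_affine_ge[OF finite_lessThan this, of "\<lambda>j. mu (xstar j)"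
      "\<lambda>j. sigt k s (xstar j) x"]
  show ?thesis unfolding kg_h_def by linarith
qed

lemma kg_h_le:
  assumes "nz > 0" and "\<forall>j<nz. \<bar>sigt k s (xstar j) x\<bar> \<le> e"
  shows "kg_h mu k s nz xstar x \<le> e * sqrt (2 / pi)"
proof -
  have "{..<nz} \<noteq> {}" using assms(1) by auto
  from integral_std_normal_Max_affine_le[OF finite_lessThan this, of "\<lambda>j. sigt k s (xstar j) x" e
      "\<lambda>j. mu (xstar j)"] assms(2)
  show ?thesis unfolding kg_h_def by simp
qed

lemma continuous_kernel_diag_bounded:
  fixes k :: "'a::topological_space \<Rightarrow> 'a \<Rightarrow> real"
  assumes "compact X" and "continuous_on (X \<times> X) (\<lambda>(a, b). k a b)"
  obtains B where "\<And>a. a \<in> X \<Longrightarrow> k a a \<le> B"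
proof -
  have "continuous_on X (\<lambda>a. k a a)"
    using continuous_on_compose[OF continuous_on_Pair[OF continuous_on_id continuous_on_id]
        continuous_on_subset[OF assms(2)]]
    by (auto simp: o_def)
  then have "bounded ((\<lambda>a. k a a) ` X)"
    by (intro compact_imp_bounded compact_continuous_image assms(1))
  then obtain B where "\<forall>a\<in>X. \<bar>k a a\<bar> \<le> B" by (auto simp: bounded_real)
  then show ?thesis using that abs_le_D1 by blast
qed

theorem theorem3:
  fixes X :: "'a::metric_space set" and k0 :: "'a \<Rightarrow> 'a \<Rightarrow> real" and m0 :: "'a \<Rightarrow> real"
    and s :: real and xs :: "nat \<Rightarrow> 'a" and ys :: "nat \<Rightarrow> real"
    and Zs :: "nat \<Rightarrow> real" and nz :: nat
  assumes X: "compact X"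
    and k0_cont: "continuous_on (X \<times> X) (\<lambda>(a, b). k0 a b)"
    and k0_pos: "pos_kernel X k0"
    and noise: "s > 0"
    and xs_X: "\<forall>n. xs n \<in> X"
    and nz: "nz \<ge> 2"
    and zero: "0 \<in> Zs ` {..<nz}"
  shows "(\<forall>n. \<forall>x\<in>X. \<forall>xstar.
            (\<forall>j<nz. is_kg_argmax X (post_mean m0 k0 s xs ys n) (post_cov k0 s xs n) s x (Zs j) (xstar j))
            \<longrightarrow> kg_h (post_mean m0 k0 s xs ys n) (post_cov k0 s xs n) s nz xstar x \<ge> 0)
       \<and> (\<forall>x\<in>X. \<forall>xstar :: nat \<Rightarrow> nat \<Rightarrow> 'a.
            infinite {n. xs n = x}
            \<longrightarrow> (\<forall>n. \<forall>j<nz. is_kg_argmax X (post_mean m0 k0 s xs ys n) (post_cov k0 s xs n) s x (Zs j) (xstar n j))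
            \<longrightarrow> (\<lambda>n. kg_h (post_mean m0 k0 s xs ys n) (post_cov k0 s xs n) s nz (xstar n) x) \<longlonglongrightarrow> 0)"
proof (intro conjI allI ballI impI)
  fix n x xstar
  show "kg_h (post_mean m0 k0 s xs ys n) (post_cov k0 s xs n) s nz xstar x \<ge> 0"
    using nz by (intro kg_h_nonneg) simp
next
  fix x and xstar :: "nat \<Rightarrow> nat \<Rightarrow> 'a"
  assume x: "x \<in> X" and sampled: "infinite {n. xs n = x}"
    and argmax: "\<forall>n. \<forall>j<nz. is_kg_argmax X (post_mean m0 k0 s xs ys n) (post_cov k0 s xs n) s x
      (Zs j) (xstar n j)"
  obtain B where B: "\<And>a. a \<in> X \<Longrightarrow> k0 a a \<le> B"
    using continuous_kernel_diag_bounded[OF X k0_cont] by blast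
  define e where "e n = sqrt B * sqrt (post_cov k0 s xs n x x) / sqrt s" for n
  have upper: "kg_h (post_mean m0 k0 s xs ys n) (post_cov k0 s xs n) s nz (xstar n) x
      \<le> e n * sqrt (2 / pi)" for n
  proof (rule kg_h_le)
    show "\<forall>j<nz. \<bar>sigt (post_cov k0 s xs n) s (xstar n j) x\<bar> \<le> e n"
    proof (intro allI impI)
      fix j assume "j < nz"
      then have a: "xstar n j \<in> X" using argmax unfolding is_kg_argmax_def by blast
      have "\<bar>sigt (post_cov k0 s xs n) s (xstar n j) x\<bar>
          \<le> sqrt (post_cov k0 s xs n (xstar n j) (xstar n j)) * sqrt (post_cov k0 s xs n x x) / sqrt s"
        by (rule abs_sigt_le[OF pos_kernel_post_cov[OF k0_pos noise xs_X] noise a x])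
      also have "\<dots> \<le> e n"
        unfolding e_def
        using order_trans[OF post_cov_diag_le_prior[OF k0_pos noise xs_X a] B[OF a]]
          pos_kernel_diag_nonneg[OF pos_kernel_post_cov[OF k0_pos noise xs_X] x] noise
        by (intro divide_right_mono mult_right_mono) auto
      finally show "\<bar>sigt (post_cov k0 s xs n) s (xstar n j) x\<bar> \<le> e n" .
    qed
  qed (use nz in simp)
  have lower: "0 \<le> kg_h (post_mean m0 k0 s xs ys n) (post_cov k0 s xs n) s nz (xstar n) x" for n
    using nz by (intro kg_h_nonneg) simp
  have limit: "(\<lambda>n. e n * sqrt (2 / pi)) \<longlonglongrightarrow> 0"
  proof -
    have "(\<lambda>n. e n * sqrt (2 / pi)) \<longlonglongrightarrow> sqrt B * sqrt 0 / sqrt s * sqrt (2 / pi)"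
      unfolding e_def using noise
      by (intro tendsto_intros post_cov_diag_tendsto_zero[OF k0_pos noise xs_X x sampled]) simp
    then show ?thesis by simp
  qed
  show "(\<lambda>n. kg_h (post_mean m0 k0 s xs ys n) (post_cov k0 s xs n) s nz (xstar n) x)
      \<longlonglongrightarrow> 0"
    by (rule tendsto_sandwich[OF _ _ tendsto_const limit]; intro always_eventually allI lower upper)
qed

end
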